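(* For the modular data of the quantum double of $S_3$, the modular invariants $Z_6$, $Z_{11}$, $Z_{14}$, $Z_{15}$ and the transposes $Z_{41}$, $Z_{51}$ are nimless.
   Context: Primaries $0,\dots,7$, all self-conjugate, with $S=\frac16\begin{pmatrix}1&1&2&2&2&2&3&3\\1&1&2&2&2&2&-3&-3\\2&2&4&-2&-2&-2&0&0\\2&2&-2&4&-2&-2&0&0\\2&2&-2&-2&-2&4&0&0\\2&2&-2&-2&4&-2&0&0\\3&-3&0&0&0&0&3&-3\\3&-3&0&0&0&0&-3&3\end{pmatrix}$, $T=\mathrm{diag}(1,1,1,1,e^{2\pi i/3},e^{4\pi i/3},1,-1)$, fusion coefficients $N_{\lambda\mu}^\nu=\sum_\rho S_{\lambda\rho}S_{\mu\rho}\overline{S_{\nu\rho}}/S_{0\rho}$. Matrices are written as $\sum Z_{\lambda\mu}\chi_\lambda\chi_\mu^*$; for linear forms $s=\sum a_\lambda\chi_\lambda$, $t=\sum b_\mu\chi_\mu$, $st^*$ is the matrix $(a_\lambda b_\mu)$. $Z_6=|\chi_0+\chi_1|^2+|\chi_2|^2+|\chi_3|^2+2|\chi_4|^2+2|\chi_5|^2+\chi_2\chi_3^*+\chi_3\chi_2^*$. With $s_1=\chi_0+\chi_1+\chi_2+\chi_3$, $s_4=\chi_0+\chi_2+\chi_6$, $s_5=\chi_0+\chi_3+\chi_6$: $Z_{ij}=s_is_j^*$. A nimrep of dimension $n$: non-negative integer $n\times n$ matrices $G_\lambda$ with $G_0=I$, $G_{\bar\lambda}=G_\lambda^t$, $G_\lambda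 G_\mu=\sum_\nu N_{\lambda\mu}^\nu G_\nu$. $\mathrm{Exp}(Z)$ is the multiset with $Z_{\mu\mu}$ copies of $\mu$. A nimrep matches $Z$ if $n=\mathrm{Tr}\,Z$ and the $G_\lambda$ are simultaneously unitarily diagonalisable with joint eigenvalues $(S_{\lambda\mu}/S_{0\mu})_\lambda$, $\mu$ running through $\mathrm{Exp}(Z)$ with multiplicity. $Z$ is nimless if no matching nimrep exists. *)

theory Defs
  imports Complex_Main
begin

text \<open>Modular data of the quantum double of S3: primaries 0..7 (all self-conjugate).\<close>

definition S_int :: "int list list" where
  "S_int = [[1,1,2,2,2,2,3,3],
            [1,1,2,2,2,2,-3,-3],
            [2,2,4,-2,-2,-2,0,0],
            [2,2,-2,4,-2,-2,0,0],
            [2,2,-2,-2,-2,4,0,0],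
            [2,2,-2,-2,4,-2,0,0],
            [3,-3,0,0,0,0,3,-3],
            [3,-3,0,0,0,0,-3,3]]"

definition Smat :: "nat \<Rightarrow> nat \<Rightarrow> complex" where
  "Smat l m = of_int (S_int ! l ! m) / 6"

definition Tmat :: "nat \<Rightarrow> complex" where
  "Tmat l = [1,1,1,1, cis (2*pi/3), cis (4*pi/3), 1, -1] ! l"

definition cconj :: "nat \<Rightarrow> nat" where
  "cconj l = l"

definition Nfus :: "nat \<Rightarrow> nat \<Rightarrow> nat \<Rightarrow> complex" where
  "Nfus l m n = (\<Sum>r<8. Smat l r * Smat m r * cnj (Smat n r) / Smat 0 r)"

text \<open>Matrices Z indexed by primaries 0..7; linear forms as coefficient vectors.\<close>
definition outer :: "(nat \<Rightarrow> nat) \<Rightarrow> (nat \<Rightarrow> nat) \<Rightarrow> nat \<Rightarrow> nat \<Rightarrow> nat" where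
  "outer s t = (\<lambda>l m. s l * t m)"

definition s1 :: "nat \<Rightarrow> nat" where
  "s1 l = (if l \<in> {0,1,2,3} then 1 else 0)"
definition s4 :: "nat \<Rightarrow> nat" where
  "s4 l = (if l \<in> {0,2,6} then 1 else 0)"
definition s5 :: "nat \<Rightarrow> nat" where
  "s5 l = (if l \<in> {0,3,6} then 1 else 0)"

definition Z11 :: "nat \<Rightarrow> nat \<Rightarrow> nat" where "Z11 = outer s1 s1"
definition Z14 :: "nat \<Rightarrow> nat \<Rightarrow> nat" where "Z14 = outer s1 s4"
definition Z15 :: "nat \<Rightarrow> nat \<Rightarrow> nat" where "Z15 = outer s1 s5"
definition Z41 :: "nat \<Rightarrow> nat \<Rightarrow> nat" where "Z41 = outer s4 s1"
definition Z51 :: "nat \<Rightarrow> nat \<Rightarrow> nat" where "Z51 = outer s5 s1"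

definition Z6 :: "nat \<Rightarrow> nat \<Rightarrow> nat" where
  "Z6 l m = (if l \<in> {0,1} \<and> m \<in> {0,1} then 1
             else if l \<in> {2,3} \<and> m \<in> {2,3} then 1
             else if l = m \<and> l \<in> {4,5} then 2
             else 0)"

definition trZ :: "(nat \<Rightarrow> nat \<Rightarrow> nat) \<Rightarrow> nat" where
  "trZ Z = (\<Sum>m<8. Z m m)"

definition is_nimrep :: "nat \<Rightarrow> (nat \<Rightarrow> nat \<Rightarrow> nat \<Rightarrow> nat) \<Rightarrow> bool" where
  "is_nimrep n G \<longleftrightarrow>
     (\<forall>i<n. \<forall>j<n. G 0 i j = (if i = j then 1 else 0)) \<and>
     (\<forall>l<8. \<forall>i<n. \<forall>j<n. G (cconj l) i j = G l j i) \<and>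
     (\<forall>l<8. \<forall>m<8. \<forall>i<n. \<forall>j<n.
        of_nat (\<Sum>k<n. G l i k * G m k j) = (\<Sum>v<8. Nfus l m v * of_nat (G v i j)))"

text \<open>Matching: n = Tr Z and there is a unitary U and a labelling e of the basis
  by Exp(Z) (mu occurring Z mu mu times) with U^* G_l U = diag(S_{l,e i}/S_{0,e i}).\<close>
definition matches :: "(nat \<Rightarrow> nat \<Rightarrow> nat) \<Rightarrow> nat \<Rightarrow> (nat \<Rightarrow> nat \<Rightarrow> nat \<Rightarrow> nat) \<Rightarrow> bool" where
  "matches Z n G \<longleftrightarrow> n = trZ Z \<and>
     (\<exists>U :: nat \<Rightarrow> nat \<Rightarrow> complex. \<exists>e :: nat \<Rightarrow> nat.
        (\<forall>i<n. e i < 8) \<and>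
        (\<forall>m<8. card {i. i < n \<and> e i = m} = Z m m) \<and>
        (\<forall>i<n. \<forall>j<n. (\<Sum>k<n. cnj (U k i) * U k j) = (if i = j then 1 else 0)) \<and>
        (\<forall>l<8. \<forall>i<n. \<forall>j<n.
           (\<Sum>k<n. \<Sum>k'<n. cnj (U k i) * of_nat (G l k k') * U k' j) =
           (if i = j then Smat l (e i) / Smat 0 (e i) else 0)))"

definition nimless :: "(nat \<Rightarrow> nat \<Rightarrow> nat) \<Rightarrow> bool" where
  "nimless Z \<longleftrightarrow> \<not> (\<exists>n G. is_nimrep n G \<and> matches Z n G)"

end

theory Submission
  imports Defs "Jordan_Normal_Form.Determinant"
begin

text \<open>
  For a nimrep matching \<open>Z\<close>, \<open>G\<^sub>\<lambda>\<close> is unitarily conjugate to the diagonal matrix of the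
  eigenvalues \<open>S\<^sub>\<lambda>\<^sub>\<mu> / S\<^sub>0\<^sub>\<mu>\<close>, \<open>\<mu> \<in> Exp(Z)\<close>, so \<open>tr G\<^sub>\<lambda> = \<Sum>\<^sub>\<mu> Z\<^sub>\<mu>\<^sub>\<mu> S\<^sub>\<lambda>\<^sub>\<mu> / S\<^sub>0\<^sub>\<mu>\<close>.
  For each of the six invariants this gives \<open>tr G\<^sub>1 = n\<close>; as \<open>G\<^sub>1\<^sup>2 = I\<close> has non-negative
  integer entries, this forces \<open>G\<^sub>1 = I\<close>. For \<open>\<lambda> = 2\<close> or \<open>3\<close> the fusion rule
  \<open>\<lambda> \<times> \<lambda> = 0 + 1 + \<lambda>\<close> then reads \<open>G\<^sub>\<lambda>\<^sup>2 = G\<^sub>\<lambda> + 2I\<close>. A symmetric non-negative integer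
  solution of this equation is a direct sum of blocks \<open>(2)\<close> and \<open>J\<^sub>3 - I\<close>; in particular
  no diagonal entry is \<open>1\<close>, so its trace is even, whereas the trace formula makes it odd
  for a suitable \<open>\<lambda>\<close>.
\<close>

lemma member_add_member_le_sum:
  fixes f :: "'a \<Rightarrow> nat"
  assumes "finite A" "i \<in> A" "j \<in> A" "i \<noteq> j"
  shows "f i + f j \<le> sum f A"
proof -
  have "sum f {i, j} \<le> sum f A"
    by (rule sum_mono2) (use assms in auto)
  then show ?thesis using assms(4) by simp
qed

lemma involution_with_full_trace_eq_id:
  fixes X :: "nat \<Rightarrow> nat \<Rightarrow> nat"
  assumes sq: "\<forall>i<n. \<forall>j<n. (\<Sum>k<n. X i k * X k j) = (if i = j then 1 else 0)"
    and tr: "(\<Sum>a<n. X a a) = n"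
  shows "\<forall>i<n. \<forall>j<n. X i j = (if i = j then 1 else 0)"
proof -
  have le1: "X a a \<le> 1" if "a < n" for a
  proof -
    have "X a a * X a a \<le> (\<Sum>k<n. X a k * X k a)"
      using member_le_sum[of a "{..<n}" "\<lambda>k. X a k * X k a"] that by simp
    then have "X a a * X a a \<le> 1" using sq that by simp
    with le_square[of "X a a"] show ?thesis by linarith
  qed
  have diag: "X a a = 1" if "a < n" for a
  proof (rule ccontr)
    assume "X a a \<noteq> 1"
    with le1 that have "(\<Sum>b<n. X b b) < (\<Sum>b<n. 1)"
      by (intro sum_strict_mono_ex1) (auto simp: le_Suc_eq)
    then show False using tr by simp
  qed
  have off_diag: "X i j = 0" if "i < n" "j < n" "i \<noteq> j" for i j
  proof -
    have "X i i * X i j \<le> (\<Sum>k<n. X i k * X k j)"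
      using member_le_sum[of i "{..<n}" "\<lambda>k. X i k * X k j"] that by simp
    then show ?thesis using sq diag that by simp
  qed
  show ?thesis using diag off_diag by simp
qed

text \<open>
  For \<open>X\<^sup>2 = X + 2I\<close>, a diagonal entry \<open>1\<close> at \<open>v\<close> leads to a neighbour \<open>a\<close> with
  \<open>X\<^sub>a\<^sub>a = 0\<close> and \<open>X\<^sub>v\<^sub>a = 1\<close>, and then to a common neighbour \<open>c\<close> of \<open>v\<close> and \<open>a\<close>;
  but \<open>(X\<^sup>2)\<^sub>v\<^sub>c \<ge> X\<^sub>v\<^sub>v X\<^sub>v\<^sub>c + X\<^sub>v\<^sub>a X\<^sub>a\<^sub>c > X\<^sub>v\<^sub>c\<close>.
\<close>
lemma square_eq_add_two_diag_ne_one: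
  fixes X :: "nat \<Rightarrow> nat \<Rightarrow> nat"
  assumes sq: "\<forall>i<n. \<forall>j<n. (\<Sum>k<n. X i k * X k j) = X i j + (if i = j then 2 else 0)"
    and sym: "\<forall>i<n. \<forall>j<n. X i j = X j i"
    and v: "v < n"
  shows "X v v \<noteq> 1"
proof
  assume vv: "X v v = 1"
  have other_neighbour: "\<exists>c<n. c \<noteq> b \<and> X a c \<noteq> 0"
    if "a < n" "b < n" "X a b * X b a < (\<Sum>k<n. X a k * X k a)" for a b
  proof (rule ccontr)
    assume "\<not> ?thesis"
    then have "(\<Sum>k<n. X a k * X k a) = (\<Sum>k\<in>{b}. X a k * X k a)"
      using that by (intro sum.mono_neutral_right) auto
    then show False using that by simp
  qed
  obtain a where a: "a < n" "a \<noteq> v" "X v a \<noteq> 0"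
    using other_neighbour[OF v v] sq v vv by auto
  have "X v v * X v a + X v a * X a a \<le> (\<Sum>k<n. X v k * X k a)"
    using member_add_member_le_sum[of "{..<n}" v a "\<lambda>k. X v k * X k a"] a v by simp
  then have aa: "X a a = 0" using sq a v vv by simp
  have "X a v * X v a \<le> (\<Sum>k<n. X a k * X k a)"
    using member_le_sum[of v "{..<n}" "\<lambda>k. X a k * X k a"] v by simp
  also have "\<dots> = 2" using sq a(1) aa by simp
  finally have "X v a * X v a \<le> 2" by (simp only: sym[rule_format, OF a(1) v])
  then have va: "X v a = 1"
    using a(3) mult_le_mono[of 2 "X v a" 2 "X v a"] by (cases "X v a \<ge> 2") auto
  have "X a v * X v a < (\<Sum>k<n. X a k * X k a)"
    using sq a(1) aa va sym[rule_format, OF a(1) v] by simp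
  then obtain c where c: "c < n" "c \<noteq> v" "X a c \<noteq> 0"
    using other_neighbour[OF a(1) v] by blast
  have "X v v * X v c + X v a * X a c \<le> (\<Sum>k<n. X v k * X k c)"
    using member_add_member_le_sum[of "{..<n}" v a "\<lambda>k. X v k * X k c"] a v by simp
  then show False using sq c v vv va by simp
qed

lemma square_eq_add_two_imp_even_trace:
  fixes X :: "nat \<Rightarrow> nat \<Rightarrow> nat"
  assumes sq: "\<forall>i<n. \<forall>j<n. (\<Sum>k<n. X i k * X k j) = X i j + (if i = j then 2 else 0)"
    and sym: "\<forall>i<n. \<forall>j<n. X i j = X j i"
  shows "even (\<Sum>a<n. X a a)"
proof (intro dvd_sum)
  fix a assume a: "a \<in> {..<n}"
  have "X a a * X a a \<le> (\<Sum>k<n. X a k * X k a)"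
    using member_le_sum[of a "{..<n}" "\<lambda>k. X a k * X k a"] a by simp
  then have "X a a * X a a \<le> X a a + 2" using sq a by simp
  moreover have "3 * X a a \<le> X a a * X a a" if "X a a \<ge> 3"
    using mult_le_mono1[OF that] .
  ultimately have "X a a \<le> 2" by linarith
  moreover have "X a a \<noteq> 1" using square_eq_add_two_diag_ne_one[OF sq sym] a by simp
  ultimately have "X a a = 0 \<or> X a a = 2" by linarith
  then show "even (X a a)" by auto
qed

lemma unitary_right_inverse:
  fixes U :: "nat \<Rightarrow> nat \<Rightarrow> complex"
  assumes u: "\<forall>i<n. \<forall>j<n. (\<Sum>k<n. cnj (U k i) * U k j) = (if i = j then 1 else 0)"
  shows "\<forall>a<n. \<forall>b<n. (\<Sum>i<n. U a i * cnj (U b i)) = (if a = b then 1 else 0)"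
proof -
  define A where "A = mat n n (\<lambda>(i,k). cnj (U k i))"
  define B where "B = mat n n (\<lambda>(k,j). U k j)"
  have "A * B = 1\<^sub>m n"
    using u by (intro eq_matI) (auto simp: A_def B_def scalar_prod_def atLeast0LessThan)
  then have BA: "B * A = 1\<^sub>m n"
    by (intro mat_mult_left_right_inverse[of A n B]) (auto simp: A_def B_def)
  show ?thesis
  proof (intro allI impI)
    fix a b assume ab: "a < n" "b < n"
    have "(\<Sum>i<n. U a i * cnj (U b i)) = (B * A) $$ (a, b)"
      using ab by (simp add: A_def B_def scalar_prod_def atLeast0LessThan)
    then show "(\<Sum>i<n. U a i * cnj (U b i)) = (if a = b then 1 else 0)"
      using BA ab by simp
  qed
qed

lemma trace_eq_sum_of_unitary_diagonalization:
  fixes U :: "nat \<Rightarrow> nat \<Rightarrow> complex" and X :: "nat \<Rightarrow> nat \<Rightarrow> nat"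
  assumes u: "\<forall>i<n. \<forall>j<n. (\<Sum>k<n. cnj (U k i) * U k j) = (if i = j then 1 else 0)"
    and diag: "\<forall>i<n. \<forall>j<n. (\<Sum>k<n. \<Sum>k'<n. cnj (U k i) * of_nat (X k k') * U k' j) =
             (if i = j then d i else 0)"
  shows "(\<Sum>a<n. of_nat (X a a)) = (\<Sum>i<n. d i)"
proof -
  have u': "\<forall>a<n. \<forall>b<n. (\<Sum>i<n. U a i * cnj (U b i)) = (if a = b then 1 else 0)"
    using unitary_right_inverse[OF u] .
  have "(\<Sum>i<n. d i) = (\<Sum>i<n. \<Sum>k<n. \<Sum>k'<n. cnj (U k i) * of_nat (X k k') * U k' i)"
    using diag by simp
  also have "\<dots> = (\<Sum>k<n. \<Sum>i<n. \<Sum>k'<n. cnj (U k i) * of_nat (X k k') * U k' i)"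
    by (rule sum.swap)
  also have "\<dots> = (\<Sum>k<n. \<Sum>k'<n. \<Sum>i<n. cnj (U k i) * of_nat (X k k') * U k' i)"
    by (rule sum.cong[OF refl], rule sum.swap)
  also have "\<dots> = (\<Sum>k<n. \<Sum>k'<n. of_nat (X k k') * (\<Sum>i<n. U k' i * cnj (U k i)))"
    by (simp add: sum_distrib_left mult_ac)
  also have "\<dots> = (\<Sum>k<n. \<Sum>k'<n. if k' = k then of_nat (X k k) else 0)"
    using u' by (intro sum.cong refl) auto
  also have "\<dots> = (\<Sum>k<n. of_nat (X k k))" by simp
  finally show ?thesis by simp
qed

lemma sum_comp_eq_sum_card_fibres:
  fixes f :: "'b \<Rightarrow> 'a::comm_semiring_1"
  assumes "finite A" "finite B" "e ` A \<subseteq> B"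
  shows "(\<Sum>i\<in>A. f (e i)) = (\<Sum>m\<in>B. of_nat (card {i \<in> A. e i = m}) * f m)"
proof -
  have "(\<Sum>i\<in>A. f (e i)) = (\<Sum>m\<in>B. \<Sum>i\<in>{i \<in> A. e i = m}. f (e i))"
    by (rule sum.group[OF assms, symmetric])
  also have "\<dots> = (\<Sum>m\<in>B. of_nat (card {i \<in> A. e i = m}) * f m)"
  proof (intro sum.cong refl)
    fix m
    have "(\<Sum>i\<in>{i \<in> A. e i = m}. f (e i)) = (\<Sum>i\<in>{i \<in> A. e i = m}. f m)"
      by (rule sum.cong) auto
    then show "(\<Sum>i\<in>{i \<in> A. e i = m}. f (e i)) = of_nat (card {i \<in> A. e i = m}) * f m"
      by simp
  qed
  finally show ?thesis .
qed

definition exponent_trace :: "(nat \<Rightarrow> nat \<Rightarrow> nat) \<Rightarrow> nat \<Rightarrow> complex" where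
  "exponent_trace Z l = (\<Sum>m<8. of_nat (Z m m) * (Smat l m / Smat 0 m))"

lemma trace_of_matching_nimrep:
  assumes "matches Z n G" "l < 8"
  shows "(\<Sum>a<n. of_nat (G l a a)) = exponent_trace Z l"
proof -
  from assms(1) obtain U e where
    e: "\<forall>i<n. e i < 8" and card: "\<forall>m<8. card {i. i < n \<and> e i = m} = Z m m" and
    u: "\<forall>i<n. \<forall>j<n. (\<Sum>k<n. cnj (U k i) * U k j) = (if i = j then 1 else 0)" and
    diag: "\<forall>l<8. \<forall>i<n. \<forall>j<n.
      (\<Sum>k<n. \<Sum>k'<n. cnj (U k i) * of_nat (G l k k') * U k' j) =
      (if i = j then Smat l (e i) / Smat 0 (e i) else 0)"
    unfolding matches_def by blast
  have "(\<Sum>a<n. of_nat (G l a a)) = (\<Sum>i<n. Smat l (e i) / Smat 0 (e i))"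
    using diag assms(2) by (intro trace_eq_sum_of_unitary_diagonalization[OF u]) simp
  also have "\<dots> = (\<Sum>m<8. of_nat (card {i \<in> {..<n}. e i = m}) * (Smat l m / Smat 0 m))"
    using e by (intro sum_comp_eq_sum_card_fibres) auto
  also have "\<dots> = exponent_trace Z l"
    using card by (simp add: exponent_trace_def)
  finally show ?thesis .
qed

lemma nimrep_product_of_fusion_0_1:
  assumes G: "is_nimrep n G" and lm: "l < 8" "m < 8" and ij: "i < n" "j < n"
    and N: "\<forall>v<8. Nfus l m v = (if v \<in> V then 1 else 0)"
  shows "(\<Sum>k<n. G l i k * G m k j) = (\<Sum>v\<in>{..<8} \<inter> V. G v i j)"
proof -
  have "(of_nat (\<Sum>k<n. G l i k * G m k j) :: complex) = (\<Sum>v<8. Nfus l m v * of_nat (G v i j))"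
    using G lm ij by (simp add: is_nimrep_def)
  also have "\<dots> = (\<Sum>v<8. if v \<in> V then of_nat (G v i j) else 0)"
    using N by (intro sum.cong refl) simp
  also have "\<dots> = (\<Sum>v\<in>{..<8} \<inter> V. of_nat (G v i j))"
    by (simp add: sum.inter_restrict)
  also have "\<dots> = of_nat (\<Sum>v\<in>{..<8} \<inter> V. G v i j)"
    by simp
  finally show ?thesis by (simp only: of_nat_eq_iff)
qed

lemma Nfus_1_1: "\<forall>v<8. Nfus 1 1 v = (if v \<in> {0} then 1 else 0)"
  by (auto simp: Nfus_def Smat_def S_int_def eval_nat_numeral less_Suc_eq)

lemma Nfus_2_2: "\<forall>v<8. Nfus 2 2 v = (if v \<in> {0, 1, 2} then 1 else 0)"
  by (auto simp: Nfus_def Smat_def S_int_def eval_nat_numeral less_Suc_eq)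

lemma Nfus_3_3: "\<forall>v<8. Nfus 3 3 v = (if v \<in> {0, 1, 3} then 1 else 0)"
  by (auto simp: Nfus_def Smat_def S_int_def eval_nat_numeral less_Suc_eq)

lemma nat_trace_of_matching_nimrep:
  assumes "matches Z n G" "l < 8" "exponent_trace Z l = of_nat t"
  shows "(\<Sum>a<n. G l a a) = t"
proof -
  have "(of_nat (\<Sum>a<n. G l a a) :: complex) = of_nat t"
    using trace_of_matching_nimrep[OF assms(1,2)] assms(3) by simp
  then show ?thesis by (simp only: of_nat_eq_iff)
qed

lemma matching_nimrep_G1_eq_id:
  assumes G: "is_nimrep n G" and match: "matches Z n G"
    and "exponent_trace Z 1 = of_nat (trZ Z)"
  shows "\<forall>i<n. \<forall>j<n. G 1 i j = (if i = j then 1 else 0)"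
proof (rule involution_with_full_trace_eq_id)
  show "\<forall>i<n. \<forall>j<n. (\<Sum>k<n. G 1 i k * G 1 k j) = (if i = j then 1 else 0)"
    using nimrep_product_of_fusion_0_1[OF G _ _ _ _ Nfus_1_1] G by (simp add: is_nimrep_def)
  show "(\<Sum>a<n. G 1 a a) = n"
    using nat_trace_of_matching_nimrep[OF match] assms(3) match by (simp add: matches_def)
qed

lemma nimrep_square_eq_add_two_if_G1_eq_id:
  assumes G: "is_nimrep n G" and x: "x \<in> {2, 3}"
    and G1: "\<forall>i<n. \<forall>j<n. G 1 i j = (if i = j then 1 else 0)"
  shows "\<forall>i<n. \<forall>j<n. (\<Sum>k<n. G x i k * G x k j) = G x i j + (if i = j then 2 else 0)"
proof (intro allI impI)
  fix i j assume ij: "i < n" "j < n"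
  have x8: "x < 8" and V: "{..<8} \<inter> {0, 1, x} = {0, 1, x}" using x by auto
  have Nx: "\<forall>v<8. Nfus x x v = (if v \<in> {0, 1, x} then 1 else 0)"
    using x Nfus_2_2 Nfus_3_3 by auto
  have "(\<Sum>k<n. G x i k * G x k j) = (\<Sum>v\<in>{..<8} \<inter> {0, 1, x}. G v i j)"
    by (rule nimrep_product_of_fusion_0_1[OF G x8 x8 ij Nx])
  also have "\<dots> = G 0 i j + G 1 i j + G x i j" unfolding V using x by auto
  finally show "(\<Sum>k<n. G x i k * G x k j) = G x i j + (if i = j then 2 else 0)"
    using G G1 ij by (simp add: is_nimrep_def)
qed

lemma nimless_if_odd_exponent_trace:
  assumes x: "x \<in> {2, 3}"
    and trace_1: "exponent_trace Z 1 = of_nat (trZ Z)"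
    and trace_x: "exponent_trace Z x = of_nat t" and "odd t"
  shows "nimless Z"
  unfolding nimless_def
proof clarify
  fix n G assume G: "is_nimrep n G" and match: "matches Z n G"
  have sym: "\<forall>i<n. \<forall>j<n. G x i j = G x j i"
    using G x by (auto simp: is_nimrep_def cconj_def)
  have "even (\<Sum>a<n. G x a a)"
    using square_eq_add_two_imp_even_trace[OF _ sym] nimrep_square_eq_add_two_if_G1_eq_id[OF G x]
      matching_nimrep_G1_eq_id[OF G match trace_1] by blast
  moreover have "(\<Sum>a<n. G x a a) = t"
    using nat_trace_of_matching_nimrep[OF match _ trace_x] x by auto
  ultimately show False using \<open>odd t\<close> by simp
qed

theorem proposition6p1:
  shows "nimless Z6 \<and> nimless Z11 \<and> nimless Z14 \<and> nimless Z15 \<and> nimless Z41 \<and> nimless Z51"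
proof -
  note modular_data = exponent_trace_def trZ_def Smat_def S_int_def eval_nat_numeral
  have "nimless Z6"
    by (rule nimless_if_odd_exponent_trace[of 2 _ 1]) (simp_all add: Z6_def modular_data)
  moreover have "nimless Z11"
    by (rule nimless_if_odd_exponent_trace[of 2 _ 5, OF _ _ _ odd_numeral])
      (simp_all add: Z11_def outer_def s1_def modular_data)
  moreover have "nimless Z14" "nimless Z41"
    by (rule nimless_if_odd_exponent_trace[of 3 _ 1];
        simp add: Z14_def Z41_def outer_def s1_def s4_def modular_data)+
  moreover have "nimless Z15" "nimless Z51"
    by (rule nimless_if_odd_exponent_trace[of 2 _ 1];
        simp add: Z15_def Z51_def outer_def s1_def s5_def modular_data)+
  ultimately show ?thesis by blast
qed

end
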